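(* Let $n,i,j$ be positive integers and $s=(2^{2n}-1)/3$. Let $$f(x)=(x^{2^i}+x^{2^j})(1+x^s+x^{2s})+x^{2^j}\in\mathbb{F}_{2^{2n}}[x].$$ For a positive integer $k$ let $\widetilde{2^k}$ denote a positive integer inverse of $2^k$ modulo $s$ (i.e. $2^k\widetilde{2^k}\equiv1\pmod s$), and let $u$ be the integer with $0\le u<3$ and $u\equiv(-1)^j(1-2^j\widetilde{2^j})/s\pmod 3$. Then the inverse of $f$ over $\mathbb{F}_{2^{2n}}$ is $$f^{-1}(x)=(x^{\widetilde{2^i}}+x^{\widetilde{2^j}})(1+x^s+x^{2s})+x^{\widetilde{2^j}+us},$$ i.e. $f^{-1}(f(c))=c$ for all $c\in\mathbb{F}_{2^{2n}}$.
   Context: A polynomial $g$ is the inverse of $f$ over $\mathbb{F}_q$ if $g(f(c))=c$ for all $c\in\mathbb{F}_q$. (The polynomial $f$ here is a permutation polynomial of $\mathbb{F}_{2^{2n}}$.) *)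

theory Defs
  imports Main "HOL-Number_Theory.Cong"
begin

definition s_exp :: "nat \<Rightarrow> nat" where
  "s_exp n = (2^(2*n) - 1) div 3"

definition f_poly :: "nat \<Rightarrow> nat \<Rightarrow> nat \<Rightarrow> 'a::field \<Rightarrow> 'a" where
  "f_poly n i j x =
     (x ^ (2^i) + x ^ (2^j)) * (1 + x ^ s_exp n + x ^ (2 * s_exp n)) + x ^ (2^j)"

text \<open>The claimed inverse, given inverses ti, tj of 2^i, 2^j mod s and the integer u.\<close>
definition g_poly :: "nat \<Rightarrow> nat \<Rightarrow> nat \<Rightarrow> nat \<Rightarrow> 'a::field \<Rightarrow> 'a" where
  "g_poly n ti tj u x =
     (x ^ ti + x ^ tj) * (1 + x ^ s_exp n + x ^ (2 * s_exp n)) + x ^ (tj + u * s_exp n)"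

end

theory Submission
  imports Defs
begin

text \<open>
  Every nonzero c in the field of order 2^(2n) satisfies c^(3s) = 1, so w = c^s is a cube root
  of unity and, in characteristic 2, 1 + w + w^2 equals 1 if w = 1 and 0 otherwise. Hence f is
  the power map c^(2^i) on the subgroup {c^s = 1} and c^(2^j) off it, both pieces preserve this
  dichotomy, and g inverts each piece: on the subgroup an inverse of 2^i modulo s suffices,
  while off it the correction u s turns the inverse of 2^j modulo s into one modulo 3s.
\<close>

lemma of_nat_card_UNIV_eq_0: "of_nat (card (UNIV :: 'a::{ring_1,finite} set)) = (0::'a)"
proof -
  \<comment> \<open>Translation by 1 permutes the ring.\<close>
  have "(\<Sum>y\<in>UNIV. y + 1) = (\<Sum>y\<in>(UNIV::'a set). y)"
    by (rule sum.reindex_bij_witness[of _ "\<lambda>y. y - 1" "\<lambda>y. y + 1"]) auto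
  thus ?thesis
    by (simp add: sum.distrib)
qed

lemma finite_field_power_card_minus_1:
  fixes x :: "'a::{field,finite}"
  assumes "x \<noteq> 0"
  shows "x ^ (card (UNIV::'a set) - 1) = 1"
proof -
  let ?N = "UNIV - {0::'a}"
  have "x ^ card ?N * (\<Prod>y\<in>?N. y) = (\<Prod>y\<in>?N. x * y)"
    by (simp add: prod.distrib)
  also have "\<dots> = (\<Prod>y\<in>?N. y)"
    by (rule prod.reindex_bij_witness[of _ "\<lambda>y. y / x" "\<lambda>y. x * y"]) (use assms in auto)
  finally have "x ^ card ?N = 1"
    by simp
  thus ?thesis
    by (simp add: card_Diff_singleton)
qed

lemma power_eq_power_if_cong:
  fixes x :: "'a::monoid_mult"
  assumes "x ^ N = 1" and "[a = b] (mod N)"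
  shows "x ^ a = x ^ b"
proof -
  have reduce: "x ^ k = x ^ (k mod N)" for k
  proof -
    have "x ^ k = (x ^ N) ^ (k div N) * x ^ (k mod N)"
      by (metis div_mult_mod_eq power_add power_mult mult.commute)
    with assms(1) show ?thesis by simp
  qed
  show ?thesis
    using assms(2) reduce[of a] reduce[of b] by (simp add: cong_def)
qed

lemma cube_root_of_unity_cases:
  fixes w :: "'a::idom"
  assumes "w ^ 3 = 1"
  shows "w = 1 \<or> 1 + w + w ^ 2 = 0"
proof -
  have "(w - 1) * (1 + w + w ^ 2) = w ^ 3 - 1"
    by (simp add: algebra_simps power2_eq_square power3_eq_cube)
  with assms show ?thesis by simp
qed

lemma cube_root_of_unity_power_ne_1:
  fixes w :: "'a::idom"
  assumes "w ^ 3 = 1" and "w \<noteq> 1" and "\<not> 3 dvd k"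
  shows "w ^ k \<noteq> 1"
proof
  assume "w ^ k = 1"
  moreover have "w ^ k = w ^ (k mod 3)"
    using assms(1) by (rule power_eq_power_if_cong) (simp add: cong_def)
  moreover have "k mod 3 = 1 \<or> k mod 3 = 2"
    using assms(3) by presburger
  moreover have "w ^ 2 \<noteq> 1"
    using assms(1,2) by (metis power2_eq_square power3_eq_cube mult_cancel_right1)
  ultimately show False
    using assms(2) by auto
qed

lemma three_times_s_exp: "3 * s_exp n = 2 ^ (2 * n) - 1"
proof -
  have "[(4::nat) ^ n = 1 ^ n] (mod 3)"
    by (rule cong_pow) (simp add: cong_def)
  hence "3 dvd (4::nat) ^ n - 1"
    by (simp add: cong_altdef_nat)
  thus ?thesis
    by (simp add: s_exp_def power_mult)
qed

lemma s_exp_pos: "n > 0 \<Longrightarrow> s_exp n > 0"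
  using three_times_s_exp[of n] one_less_power[of "2::nat" "2 * n"] by simp

lemma inverse_exponent_cong_mod_3s:
  fixes s j t u :: nat
  assumes "s > 0" and "[2 ^ j * t = 1] (mod s)"
    and "[int u = (-1) ^ j * ((1 - 2 ^ j * int t) div int s)] (mod 3)"
  shows "[2 ^ j * (t + u * s) = 1] (mod 3 * s)"
proof -
  obtain k :: int where k: "1 - 2 ^ j * int t = k * int s"
  proof -
    have "[2 ^ j * int t = 1] (mod int s)"
      using assms(2) by (metis cong_int_iff of_nat_1 of_nat_mult of_nat_numeral of_nat_power)
    hence "int s dvd 1 - 2 ^ j * int t"
      by (simp add: cong_iff_dvd_diff dvd_diff_commute)
    thus ?thesis
      by (metis dvd_def mult.commute that)
  qed
  have "(1 - 2 ^ j * int t) div int s = k"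
    using k assms(1) by simp
  hence "[int u = (-1) ^ j * k] (mod 3)"
    using assms(3) by simp
  moreover have "[(2::int) ^ j = (-1) ^ j] (mod 3)"
    by (rule cong_pow) (simp add: cong_def)
  ultimately have "[2 ^ j * int u = (-1) ^ j * ((-1) ^ j * k)] (mod 3)"
    by (metis cong_mult mult.commute)
  hence "[2 ^ j * int u = k] (mod 3)"
    by (simp add: power_mult_distrib[symmetric])
  hence "int (3 * s) dvd (2 ^ j * int u - k) * int s"
    by (simp add: cong_iff_dvd_diff)
  moreover have "int (2 ^ j * (t + u * s)) - 1 = (2 ^ j * int u - k) * int s"
    using k by (simp add: algebra_simps)
  ultimately show ?thesis
    by (simp add: cong_int_iff[symmetric] cong_iff_dvd_diff)
qed

lemma dichotomous_power_sum_eq: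
  fixes x :: "'a::field"
  assumes char_2: "(2::'a) = 0" and "(x ^ s) ^ 3 = 1"
  shows "(x ^ a + x ^ b) * (1 + x ^ s + x ^ (2 * s)) + x ^ (b + d * s)
           = (if x ^ s = 1 then x ^ a else x ^ (b + d * s))"
proof -
  have square: "x ^ (2 * s) = (x ^ s) ^ 2"
    by (simp add: power_mult mult.commute)
  have double: "y + y = 0" for y :: 'a
    using char_2 by (metis mult_2 mult_zero_left)
  show ?thesis
  proof (cases "x ^ s = 1")
    case True
    hence "x ^ (b + d * s) = x ^ b"
      by (simp add: power_add power_mult mult.commute[of d])
    moreover have "(1::'a) + 1 + 1 = 1"
      using double[of 1] by simp
    ultimately show ?thesis
      using True square double[of "x ^ b"] by (simp add: algebra_simps)
  next
    case False
    then show ?thesis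
      using cube_root_of_unity_cases[OF assms(2)] square by simp
  qed
qed

lemma f_poly_eq_if:
  fixes x :: "'a::field"
  assumes "(2::'a) = 0" and "x ^ (3 * s_exp n) = 1"
  shows "f_poly n i j x = (if x ^ s_exp n = 1 then x ^ 2 ^ i else x ^ 2 ^ j)"
  using dichotomous_power_sum_eq[where d = 0, of x "s_exp n" "2 ^ i" "2 ^ j"] assms
  by (simp add: f_poly_def power_mult mult.commute[of 3])

lemma g_poly_eq_if:
  fixes y :: "'a::field"
  assumes "(2::'a) = 0" and "y ^ (3 * s_exp n) = 1"
  shows "g_poly n ti tj u y = (if y ^ s_exp n = 1 then y ^ ti else y ^ (tj + u * s_exp n))"
  using dichotomous_power_sum_eq[of y "s_exp n" ti tj u] assms
  by (simp add: g_poly_def power_mult mult.commute[of 3])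

lemma g_poly_f_poly_eq:
  fixes c :: "'a::field"
  assumes char_2: "(2::'a) = 0" and c: "c ^ (3 * s_exp n) = 1"
    and ti: "[2 ^ i * ti = 1] (mod s_exp n)"
    and tj: "[2 ^ j * (tj + u * s_exp n) = 1] (mod 3 * s_exp n)"
  shows "g_poly n ti tj u (f_poly n i j c) = c"
proof -
  let ?s = "s_exp n"
  have power_root: "(c ^ e) ^ (3 * ?s) = 1" for e
    using c by (metis power_mult mult.commute power_one)
  show ?thesis
  proof (cases "c ^ ?s = 1")
    case True
    have "(c ^ 2 ^ i) ^ ?s = 1"
      using True by (metis power_mult mult.commute power_one)
    hence "g_poly n ti tj u (f_poly n i j c) = c ^ (2 ^ i * ti)"
      using f_poly_eq_if[OF char_2 c] g_poly_eq_if[OF char_2 power_root] True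
      by (simp add: power_mult)
    also have "\<dots> = c ^ 1"
      using True ti by (rule power_eq_power_if_cong)
    finally show ?thesis by simp
  next
    case False
    have "(c ^ ?s) ^ 3 = 1"
      using c by (simp add: power_mult[symmetric] mult.commute)
    hence "(c ^ ?s) ^ 2 ^ j \<noteq> 1"
      using False by (rule cube_root_of_unity_power_ne_1)
        (use coprime_common_divisor[of 3 "2 ^ j" "3::nat"] in auto)
    hence "(c ^ 2 ^ j) ^ ?s \<noteq> 1"
      by (simp add: power_mult[symmetric] mult.commute)
    hence "g_poly n ti tj u (f_poly n i j c) = c ^ (2 ^ j * (tj + u * ?s))"
      using f_poly_eq_if[OF char_2 c] g_poly_eq_if[OF char_2 power_root] False
      by (simp add: power_mult)
    also have "\<dots> = c ^ 1"
      using c tj by (rule power_eq_power_if_cong)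
    finally show ?thesis by simp
  qed
qed

theorem corollary4p4:
  fixes n i j ti tj u :: nat
  assumes fld: "card (UNIV :: 'a::{field,finite} set) = 2 ^ (2 * n)"
    and "n > 0" and "i > 0" and "j > 0"
    and "ti > 0" and "[2 ^ i * ti = 1] (mod s_exp n)"
    and "tj > 0" and "[2 ^ j * tj = 1] (mod s_exp n)"
    and "u < 3"
    and "[int u = (-1) ^ j * ((1 - 2 ^ j * int tj) div int (s_exp n))] (mod 3)"
  shows "\<forall>c::'a. g_poly n ti tj u (f_poly n i j c) = c"
proof
  fix c :: 'a
  have "(2::'a) ^ (2 * n) = 0"
    using of_nat_card_UNIV_eq_0[where 'a = 'a] fld by simp
  hence char_2: "(2::'a) = 0"
    by simp
  have tj: "[2 ^ j * (tj + u * s_exp n) = 1] (mod 3 * s_exp n)"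
    using inverse_exponent_cong_mod_3s s_exp_pos assms by blast
  show "g_poly n ti tj u (f_poly n i j c) = c"
  proof (cases "c = 0")
    case True
    then show ?thesis
      using \<open>ti > 0\<close> \<open>tj > 0\<close> by (simp add: f_poly_def g_poly_def zero_power)
  next
    case False
    then have "c ^ (3 * s_exp n) = 1"
      using finite_field_power_card_minus_1 fld three_times_s_exp by metis
    then show ?thesis
      using g_poly_f_poly_eq char_2 tj \<open>[2 ^ i * ti = 1] (mod s_exp n)\<close> by blast
  qed
qed

end
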